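(* Let $\mathcal{A}$ be a unital commutative $C^*$-algebra and let $\tau:\mathcal{A}\to\mathcal{A}$ be a surjective map. Let $A,B:H_\mathcal{A}\to H_\mathcal{A}$ be injective, continuous $\tau$-quasi-modular maps with $\dim_\mathcal{A}(A(H_\mathcal{A}))\geq 2$. Suppose that for every $x\in H_\mathcal{A}$ there is $\lambda_x\in\mathcal{A}$ with $Bx=\lambda_xAx$. Then there exists $\lambda\in\mathcal{A}$ such that $B=\lambda A$.
   Context: $H_\mathcal{A}=H\otimes\mathcal{A}$ is the standard Hilbert $\mathcal{A}$-module over a separable infinite-dimensional Hilbert space $H$ (left module, inner product $\mathcal{A}$-linear in the first variable). A map $A:H_\mathcal{A}\to H_\mathcal{A}$ is called $\tau$-quasi-modular, for a map $\tau:\mathcal{A}\to\mathcal{A}$, if it is additive and $A(\lambda x)=\tau(\lambda)A(x)$ for all $\lambda\in\mathcal{A}$, $x\in H_\mathcal{A}$. $\dim_\mathcal{A}(A(H_\mathcal{A}))\ge 2$ means that $A(H_\mathcal{A})$ contains at least two nonzero mutually orthogonal elements (i.e. it is not generated by a single element). *)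

theory Defs
  imports "HOL-Analysis.Analysis"
begin

text \<open>Complex scalars are encoded by a distinguished
  element cunit with cunit*cunit = -1: the complex scalar a + b i acts as multiplication by
  scaleR a 1 + scaleR b cunit.\<close>

class cstar_ops =
  fixes cstar :: "'a \<Rightarrow> 'a"
    and cunit :: 'a

class comm_cstar_algebra = real_normed_algebra_1 + banach + comm_ring_1 + cstar_ops +
  assumes ii_sq: "cunit * cunit = - 1"
    and norm_complex_scale:
      "norm ((scaleR a 1 + scaleR b cunit) * x) = sqrt (a\<^sup>2 + b\<^sup>2) * norm x"
    and cstar_add: "cstar (x + y) = cstar x + cstar y"
    and cstar_scaleR: "cstar (scaleR r x) = scaleR r (cstar x)"
    and cstar_ii: "cstar cunit = - cunit"
    and cstar_mult: "cstar (x * y) = cstar y * cstar x"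
    and cstar_cstar: "cstar (cstar x) = x"
    and cstar_identity: "norm (cstar x * x) = (norm x)\<^sup>2"

text \<open>The standard Hilbert module H_A = l2(A): sequences x with sum x_n x_n^* norm-convergent.\<close>

definition HA :: "(nat \<Rightarrow> 'a::comm_cstar_algebra) set" where
  "HA = {x. summable (\<lambda>n. x n * cstar (x n))}"

definition hinner :: "(nat \<Rightarrow> 'a::comm_cstar_algebra) \<Rightarrow> (nat \<Rightarrow> 'a) \<Rightarrow> 'a" where
  "hinner x y = (\<Sum>n. x n * cstar (y n))"

definition hnorm :: "(nat \<Rightarrow> 'a::comm_cstar_algebra) \<Rightarrow> real" where
  "hnorm x = sqrt (norm (hinner x x))"

definition hadd :: "(nat \<Rightarrow> 'a::comm_cstar_algebra) \<Rightarrow> (nat \<Rightarrow> 'a) \<Rightarrow> nat \<Rightarrow> 'a" where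
  "hadd x y = (\<lambda>n. x n + y n)"

definition hdiff :: "(nat \<Rightarrow> 'a::comm_cstar_algebra) \<Rightarrow> (nat \<Rightarrow> 'a) \<Rightarrow> nat \<Rightarrow> 'a" where
  "hdiff x y = (\<lambda>n. x n - y n)"

definition hsmult :: "'a::comm_cstar_algebra \<Rightarrow> (nat \<Rightarrow> 'a) \<Rightarrow> nat \<Rightarrow> 'a" where
  "hsmult l x = (\<lambda>n. l * x n)"

definition hzero :: "nat \<Rightarrow> 'a::comm_cstar_algebra" where
  "hzero = (\<lambda>n. 0)"

text \<open>A map H_A \<rightarrow> H_A (only its values on H_A matter).\<close>
definition maps_HA :: "((nat \<Rightarrow> 'a::comm_cstar_algebra) \<Rightarrow> (nat \<Rightarrow> 'a)) \<Rightarrow> bool" where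
  "maps_HA T \<longleftrightarrow> (\<forall>x\<in>HA. T x \<in> HA)"

definition quasi_modular ::
  "('a::comm_cstar_algebra \<Rightarrow> 'a) \<Rightarrow> ((nat \<Rightarrow> 'a) \<Rightarrow> (nat \<Rightarrow> 'a)) \<Rightarrow> bool" where
  "quasi_modular tau T \<longleftrightarrow>
     (\<forall>x\<in>HA. \<forall>y\<in>HA. T (hadd x y) = hadd (T x) (T y)) \<and>
     (\<forall>l. \<forall>x\<in>HA. T (hsmult l x) = hsmult (tau l) (T x))"

definition continuous_HA :: "((nat \<Rightarrow> 'a::comm_cstar_algebra) \<Rightarrow> (nat \<Rightarrow> 'a)) \<Rightarrow> bool" where
  "continuous_HA T \<longleftrightarrow>
     (\<forall>x\<in>HA. \<forall>e>0. \<exists>d>0. \<forall>y\<in>HA. hnorm (hdiff y x) < d \<longrightarrow> hnorm (hdiff (T y) (T x)) < e)"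

text \<open>dim_A(T(H_A)) \<ge> 2: the image contains two nonzero mutually orthogonal elements.\<close>
definition dim_image_ge2 :: "((nat \<Rightarrow> 'a::comm_cstar_algebra) \<Rightarrow> (nat \<Rightarrow> 'a)) \<Rightarrow> bool" where
  "dim_image_ge2 T \<longleftrightarrow>
     (\<exists>u\<in>T ` HA. \<exists>v\<in>T ` HA. u \<noteq> hzero \<and> v \<noteq> hzero \<and> hinner u v = 0)"

end

theory Submission
  imports Defs
begin

(* Fix the unit vector e0 = (1,0,0,...) of H_A and write B e0 = l2 A e0.
   Given x with B x = l1 A x we show (l1 - l2) A x = 0, so B = l2 A.
   (1) Testing the pointwise proportionality hypothesis on the combinations p x + r y,
       with tau p = (A y)_n and tau r = -(A x)_n, kills the n-th coordinate of A and
       yields (l1 - l2) (A x)_n (A y)_n = 0; testing it on x + y yields one scalar mu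
       with mu (A x + A y) = l1 A x + l2 A y coordinatewise.
   (2) A purely algebraic identity, together with the fact that a commutative
       C*-algebra has no nonzero nilpotents, turns (1) into
       (l1 - l2) (A x)_m (A y)_n = 0 for all m, n.
   (3) For y = e0 the coordinates of A e0 have trivial common annihilator: this uses
       surjectivity of tau and injectivity of A.  Hence (l1 - l2) (A x)_m = 0. *)

text \<open>A commutative C*-algebra is reduced: the C*-identity forbids nilpotents of order 2.\<close>

lemma cstar_square_zero:
  fixes y :: "'a::comm_cstar_algebra"
  assumes "y * y = 0"
  shows "y = 0"
proof -
  define z where "z = cstar y * y"
  have self_adjoint: "cstar z = z"
    unfolding z_def by (simp add: cstar_mult cstar_cstar)
  have "cstar z * z = (cstar y * cstar y) * (y * y)"
    using self_adjoint unfolding z_def by (simp add: ac_simps)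
  also have "\<dots> = 0" using assms by simp
  finally have "z = 0" using cstar_identity[of z] by simp
  hence "(norm y)\<^sup>2 = 0" using cstar_identity[of y] unfolding z_def by simp
  thus ?thesis by simp
qed

lemma two_scalar_determinant:
  fixes mu l1 l2 a1 a2 b1 b2 :: "'a::comm_ring_1"
  assumes a: "mu * (a1 + a2) = l1 * a1 + l2 * a2"
    and b: "mu * (b1 + b2) = l1 * b1 + l2 * b2"
  shows "(l1 - l2) * (a1 * b2 - b1 * a2) = 0"
proof -
  define Ea where "Ea = (mu - l1) * a1 + (mu - l2) * a2"
  define Eb where "Eb = (mu - l1) * b1 + (mu - l2) * b2"
  have "Ea = 0" "Eb = 0" using a b unfolding Ea_def Eb_def by (simp_all add: algebra_simps)
  moreover have "(l1 - l2) * (a1 * b2 - b1 * a2) = (a1 + a2) * Eb - (b1 + b2) * Ea"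
    unfolding Ea_def Eb_def by (simp add: algebra_simps)
  ultimately show ?thesis by simp
qed

text \<open>In a reduced ring, the determinant identity upgrades to the vanishing of the
  mixed products, once l1 - l2 already annihilates the diagonal products a1 a2, b1 b2.\<close>

lemma two_scalar_mixed_product:
  fixes mu l1 l2 a1 a2 b1 b2 :: "'a::comm_cstar_algebra"
  assumes "mu * (a1 + a2) = l1 * a1 + l2 * a2" "mu * (b1 + b2) = l1 * b1 + l2 * b2"
    and diag: "(l1 - l2) * (a1 * a2) = 0"
  shows "(l1 - l2) * a1 * b2 = 0"
proof -
  define d where "d = l1 - l2"
  have det: "d * (a1 * b2) = d * (b1 * a2)"
    using two_scalar_determinant[OF assms(1,2)] unfolding d_def by (simp add: algebra_simps)
  have "(d * a1 * b2) * (d * a1 * b2) = (d * (b1 * a2)) * (d * a1 * b2)"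
    using det by (simp add: ac_simps)
  also have "\<dots> = (d * (a1 * a2)) * (d * (b1 * b2))" by (simp add: ac_simps)
  also have "\<dots> = 0" using diag unfolding d_def by simp
  finally show ?thesis using cstar_square_zero unfolding d_def by blast
qed

lemma HA_smult:
  assumes "x \<in> HA"
  shows "hsmult l x \<in> HA"
proof -
  have "summable (\<lambda>n. (l * cstar l) * (x n * cstar (x n)))"
    using assms by (simp add: HA_def summable_mult)
  moreover have "\<And>n. (l * x n) * cstar (l * x n) = (l * cstar l) * (x n * cstar (x n))"
    by (simp add: cstar_mult ac_simps)
  ultimately show ?thesis by (simp add: HA_def hsmult_def)
qed

lemma HA_add_finite_support:
  assumes "x \<in> HA" and "finite {n. y n \<noteq> 0}"
  shows "hadd x y \<in> HA"
proof -
  have "eventually (\<lambda>n. y n = 0) sequentially"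
    using assms(2) by (simp add: cofinite_eq_sequentially[symmetric] eventually_cofinite)
  hence "eventually (\<lambda>n. (x n + y n) * cstar (x n + y n) = x n * cstar (x n)) sequentially"
    by (rule eventually_mono) simp
  hence "summable (\<lambda>n. (x n + y n) * cstar (x n + y n)) = summable (\<lambda>n. x n * cstar (x n))"
    by (rule summable_cong)
  thus ?thesis using assms(1) by (simp add: HA_def hadd_def)
qed

definition e0 :: "nat \<Rightarrow> 'a::comm_cstar_algebra" where
  "e0 = (\<lambda>n. if n = 0 then 1 else 0)"

lemma e0_finite_support: "finite {n. (e0 :: nat \<Rightarrow> 'a::comm_cstar_algebra) n \<noteq> 0}"
  by (rule finite_subset[of _ "{0}"]) (auto simp: e0_def)

lemma hzero_in_HA: "hzero \<in> HA"
  by (simp add: HA_def hzero_def)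

lemma e0_in_HA: "e0 \<in> HA"
  using HA_add_finite_support[OF hzero_in_HA e0_finite_support]
  by (simp add: hadd_def hzero_def)

lemma HA_combination_e0:
  assumes "x \<in> HA"
  shows "hadd (hsmult p x) (hsmult r e0) \<in> HA"
proof (rule HA_add_finite_support[OF HA_smult[OF assms]])
  show "finite {n. hsmult r (e0 :: nat \<Rightarrow> 'a) n \<noteq> 0}"
    by (rule finite_subset[OF _ e0_finite_support]) (auto simp: hsmult_def e0_def)
qed

lemma quasi_modular_hzero:
  assumes "quasi_modular tau T"
  shows "T hzero = hzero"
proof -
  have "hadd hzero hzero = (hzero :: nat \<Rightarrow> 'a)" by (simp add: hadd_def hzero_def)
  hence "T hzero = hadd (T hzero) (T hzero)"
    using assms hzero_in_HA unfolding quasi_modular_def by metis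
  hence "\<And>n. T hzero n = T hzero n + T hzero n" by (metis hadd_def)
  thus ?thesis by (auto simp: hzero_def)
qed

text \<open>Every annihilator c equals tau l for some l; then
  A (l e0) = 0 forces l = 0 by injectivity, so c = tau 0.  As the annihilators form an
  additive group containing tau 0, also tau 0 + tau 0 = tau 0, i.e. tau 0 = 0.\<close>

lemma quasi_modular_e0_faithful:
  assumes "surj tau" "inj_on A HA" "quasi_modular tau A"
    and "\<forall>m. c * A e0 m = 0"
  shows "c = 0"
proof -
  have A_smult: "\<And>l x. x \<in> HA \<Longrightarrow> A (hsmult l x) = hsmult (tau l) (A x)"
    using assms(3) unfolding quasi_modular_def by blast
  have annihilator_is_tau0: "c' = tau 0" if "\<forall>m. c' * A e0 m = 0" for c'
  proof -
    obtain l where l: "c' = tau l" using assms(1) by (metis surjD)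
    have "A (hsmult l e0) = A hzero"
      using A_smult[OF e0_in_HA] that l quasi_modular_hzero[OF assms(3)]
      by (auto simp: hsmult_def hzero_def)
    hence "hsmult l e0 = hzero"
      by (rule inj_onD[OF assms(2) _ HA_smult[OF e0_in_HA] hzero_in_HA])
    hence "l = 0" by (metis e0_def hsmult_def hzero_def mult.right_neutral)
    thus ?thesis using l by simp
  qed
  have "hsmult (tau 0) (A e0) = hzero"
    using A_smult[OF e0_in_HA, of 0] quasi_modular_hzero[OF assms(3)]
    by (simp add: hsmult_def hzero_def)
  hence "\<forall>m. tau 0 * A e0 m = 0" by (metis hsmult_def hzero_def)
  hence "\<forall>m. (tau 0 + tau 0) * A e0 m = 0" by (simp only: distrib_right) simp
  hence "tau 0 + tau 0 = tau 0" by (rule annihilator_is_tau0)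
  hence "tau 0 = 0" by simp
  thus ?thesis using annihilator_is_tau0[OF assms(4)] by simp
qed

text \<open>Step (1a): testing proportionality on p x + r y with coefficients that make the
  n-th coordinate of A vanish shows that l1 - l2 annihilates (A x)_n (A y)_n.\<close>

lemma proportional_coordinate_product:
  assumes "surj tau" "quasi_modular tau A" "quasi_modular tau B"
    and proportional: "\<forall>v\<in>HA. \<exists>l. B v = hsmult l (A v)"
    and x: "x \<in> HA" and y: "y \<in> HA"
    and comb: "\<And>p r. hadd (hsmult p x) (hsmult r y) \<in> HA"
    and Bx: "B x = hsmult l1 (A x)" and By: "B y = hsmult l2 (A y)"
  shows "(l1 - l2) * (A x n * A y n) = 0"
proof -
  obtain p where p: "tau p = A y n" using assms(1) by (metis surjD)
  obtain r where r: "tau r = - A x n" using assms(1) by (metis surjD)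
  define v where "v = hadd (hsmult p x) (hsmult r y)"
  obtain mu where mu: "B v = hsmult mu (A v)" using proportional comb unfolding v_def by blast
  have Av: "A v n = 0"
    using assms(2) x y comb[of p r] p r HA_smult[OF x, of p] HA_smult[OF y, of r]
    unfolding v_def quasi_modular_def by (simp add: hadd_def hsmult_def ac_simps)
  have "B v n = A y n * (l1 * A x n) + (- A x n) * (l2 * A y n)"
    using assms(3) x y p r Bx By HA_smult[OF x, of p] HA_smult[OF y, of r]
    unfolding v_def quasi_modular_def by (simp add: hadd_def hsmult_def)
  moreover have "B v n = 0" using mu Av by (simp add: hsmult_def)
  ultimately show ?thesis by (simp add: algebra_simps)
qed

lemma proportional_sum_scalar:
  assumes "quasi_modular tau A" "quasi_modular tau B"
    and proportional: "\<forall>v\<in>HA. \<exists>l. B v = hsmult l (A v)"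
    and x: "x \<in> HA" and y: "y \<in> HA" and xy: "hadd x y \<in> HA"
    and Bx: "B x = hsmult l1 (A x)" and By: "B y = hsmult l2 (A y)"
  obtains mu where "\<And>m. mu * (A x m + A y m) = l1 * A x m + l2 * A y m"
proof -
  obtain mu where mu: "B (hadd x y) = hsmult mu (A (hadd x y))" using proportional xy by blast
  have "B (hadd x y) = hadd (B x) (B y)" "A (hadd x y) = hadd (A x) (A y)"
    using assms(1,2) x y unfolding quasi_modular_def by blast+
  hence "\<And>m. mu * (A x m + A y m) = l1 * A x m + l2 * A y m"
    using mu Bx By by (metis hadd_def hsmult_def)
  thus thesis by (rule that)
qed

lemma proportional_scalars_mixed_products:
  assumes "surj tau" "quasi_modular tau A" "quasi_modular tau B"
    and proportional: "\<forall>v\<in>HA. \<exists>l. B v = hsmult l (A v)"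
    and x: "x \<in> HA" and y: "y \<in> HA"
    and comb: "\<And>p r. hadd (hsmult p x) (hsmult r y) \<in> HA"
    and Bx: "B x = hsmult l1 (A x)" and By: "B y = hsmult l2 (A y)"
  shows "(l1 - l2) * A x m * A y n = 0"
proof -
  have "hadd x y = hadd (hsmult 1 x) (hsmult 1 y)" by (simp add: hadd_def hsmult_def)
  hence "hadd x y \<in> HA" using comb by simp
  then obtain mu where mu: "\<And>k. mu * (A x k + A y k) = l1 * A x k + l2 * A y k"
    using proportional_sum_scalar[OF assms(2,3) proportional x y _ Bx By] by blast
  show ?thesis
    using two_scalar_mixed_product[OF mu mu proportional_coordinate_product[OF assms]] .
qed

theorem lemma9:
  fixes tau :: "'a::comm_cstar_algebra \<Rightarrow> 'a"
    and A B :: "(nat \<Rightarrow> 'a) \<Rightarrow> (nat \<Rightarrow> 'a)"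
  assumes "surj tau"
    and "maps_HA A" and "maps_HA B"
    and "inj_on A HA" and "inj_on B HA"
    and "continuous_HA A" and "continuous_HA B"
    and "quasi_modular tau A" and "quasi_modular tau B"
    and "dim_image_ge2 A"
    and "\<forall>x\<in>HA. \<exists>l. B x = hsmult l (A x)"
  shows "\<exists>l. \<forall>x\<in>HA. B x = hsmult l (A x)"
proof -
  obtain l2 where l2: "B e0 = hsmult l2 (A e0)" using assms(11) e0_in_HA by blast
  have "B x = hsmult l2 (A x)" if x: "x \<in> HA" for x
  proof -
    obtain l1 where l1: "B x = hsmult l1 (A x)" using assms(11) x by blast
    have "(l1 - l2) * A x m = 0" for m
    proof (rule quasi_modular_e0_faithful[OF assms(1,4,8)], rule allI)
      fix n
      show "(l1 - l2) * A x m * A e0 n = 0"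
        by (rule proportional_scalars_mixed_products[OF assms(1,8,9,11) x e0_in_HA
              HA_combination_e0[OF x] l1 l2])
    qed
    thus ?thesis using l1 by (simp add: hsmult_def fun_eq_iff algebra_simps)
  qed
  thus ?thesis by blast
qed

end
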